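(* Let $G$ be an undirected unweighted graph on $n\ge 2$ vertices with strong connectivity $k\ge 1$ such that no vertex-induced subgraph of $G$ has strong connectivity at least $2k$. Then $G$ has $\Theta(nk)$ edges, i.e. there are absolute constants $a,b>0$ with $ank\le |E(G)|\le bnk$.
   Context: The strong connectivity of a graph is the size of its minimum cut (the minimum, over $\emptyset\ne S\subsetneq V$, of the number of edges between $S$ and $V\setminus S$); a graph is strongly $k$-connected if it has no cut of size less than $k$. Subgraphs considered are vertex-induced subgraphs on at least two vertices. *)

theory Defs
  imports Complex_Main
begin

definition simple_graph :: "'a set \<Rightarrow> 'a set set \<Rightarrow> bool" where
  "simple_graph V E \<longleftrightarrow> finite V \<and>
     (\<forall>e\<in>E. \<exists>u v. e = {u, v} \<and> u \<noteq> v \<and> u \<in> V \<and> v \<in> V)"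

definition cut_size :: "'a set set \<Rightarrow> 'a set \<Rightarrow> nat" where
  "cut_size E S = card {e\<in>E. e \<inter> S \<noteq> {} \<and> \<not> e \<subseteq> S}"

definition strong_conn :: "'a set \<Rightarrow> 'a set set \<Rightarrow> nat" where
  "strong_conn V E = Min {cut_size E S | S. S \<noteq> {} \<and> S \<subset> V}"

definition induced_edges :: "'a set set \<Rightarrow> 'a set \<Rightarrow> 'a set set" where
  "induced_edges E W = {e\<in>E. e \<subseteq> W}"

end

theory Submission
  imports Defs
begin

text \<open>Lower bound: every vertex is a one-vertex cut, so its degree is at least k, and the
  handshake lemma gives |E| \<ge> nk/2. Upper bound: split the vertex set along a minimum cut
  of the induced subgraph, which has fewer than 2k edges, and recurse on both sides;
  this peels off at most n - 1 cuts, so |E| < 2k(n - 1).\<close>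

lemma finite_cut_sizes:
  assumes "finite W"
  shows "finite {cut_size F S | S. S \<noteq> {} \<and> S \<subset> W}"
proof -
  have "{cut_size F S | S. S \<noteq> {} \<and> S \<subset> W} \<subseteq> cut_size F ` Pow W" by auto
  thus ?thesis using assms by (meson finite_Pow_iff finite_imageI finite_subset)
qed

lemma strong_conn_le_cut_size:
  assumes "finite W" "S \<noteq> {}" "S \<subset> W"
  shows "strong_conn W F \<le> cut_size F S"
  unfolding strong_conn_def using assms finite_cut_sizes[OF assms(1)] by (intro Min_le) auto

lemma strong_conn_attained:
  assumes "finite W" "card W \<ge> 2"
  obtains S where "S \<noteq> {}" "S \<subset> W" "cut_size F S = strong_conn W F"
proof -
  obtain w where w: "w \<in> W" using assms by fastforce
  have "{w} \<noteq> W" using assms by auto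
  hence "{cut_size F S | S. S \<noteq> {} \<and> S \<subset> W} \<noteq> {}" using w by blast
  hence "strong_conn W F \<in> {cut_size F S | S. S \<noteq> {} \<and> S \<subset> W}"
    unfolding strong_conn_def by (rule Min_in[OF finite_cut_sizes[OF assms(1)]])
  then obtain S where "S \<noteq> {}" "S \<subset> W" "strong_conn W F = cut_size F S" by blast
  then show ?thesis by (intro that) simp_all
qed

lemma simple_graph_edgeE:
  assumes "simple_graph V E" "e \<in> E"
  obtains u v where "e = {u, v}" "u \<noteq> v" "u \<in> V" "v \<in> V"
  using assms unfolding simple_graph_def by blast

lemma simple_graph_edges_subset_Pow: "simple_graph V E \<Longrightarrow> E \<subseteq> Pow V"
  by (auto elim: simple_graph_edgeE)

lemma simple_graph_finite_edges: "simple_graph V E \<Longrightarrow> finite E"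
  using simple_graph_edges_subset_Pow finite_subset unfolding simple_graph_def
  by (metis finite_Pow_iff)

lemma simple_graph_card_edge: "simple_graph V E \<Longrightarrow> e \<in> E \<Longrightarrow> card e = 2"
  by (auto elim: simple_graph_edgeE)

lemma simple_graph_no_loop: "simple_graph V E \<Longrightarrow> e \<in> E \<Longrightarrow> \<not> e \<subseteq> {v}"
  by (auto elim!: simple_graph_edgeE)

lemma simple_graph_induced_edges_self: "simple_graph V E \<Longrightarrow> induced_edges E V = E"
  using simple_graph_edges_subset_Pow unfolding induced_edges_def by auto

definition degree :: "'a set set \<Rightarrow> 'a \<Rightarrow> nat" where
  "degree E v = card {e\<in>E. v \<in> e}"

lemma handshake:
  assumes sg: "simple_graph V E"
  shows "(\<Sum>v\<in>V. degree E v) = 2 * card E"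
proof -
  have finV: "finite V" using sg unfolding simple_graph_def by blast
  have EP: "E \<subseteq> Pow V" using simple_graph_edges_subset_Pow[OF sg] .
  have finE: "finite E" using simple_graph_finite_edges[OF sg] .
  have incidences: "prod.swap ` (SIGMA e:E. e) = (SIGMA v:V. {e\<in>E. v \<in> e})"
    using EP by (auto simp: image_iff) blast
  have "(\<Sum>v\<in>V. degree E v) = card (SIGMA v:V. {e\<in>E. v \<in> e})"
    unfolding degree_def using finV finE by (subst card_SigmaI) auto
  also have "\<dots> = card (SIGMA e:E. e)"
    unfolding incidences[symmetric] by (rule card_image) (simp add: swap_inj_on)
  also have "\<dots> = (\<Sum>e\<in>E. card e)"
    using finE EP finV by (subst card_SigmaI) (auto intro: finite_subset)
  also have "\<dots> = (\<Sum>e\<in>E. 2)" using simple_graph_card_edge[OF sg] by (intro sum.cong) auto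
  finally show ?thesis by simp
qed

lemma cut_size_singleton:
  assumes "simple_graph V E"
  shows "cut_size E {v} = degree E v"
proof -
  have "{e\<in>E. e \<inter> {v} \<noteq> {} \<and> \<not> e \<subseteq> {v}} = {e\<in>E. v \<in> e}"
    using simple_graph_no_loop[OF assms] by blast
  then show ?thesis unfolding cut_size_def degree_def by simp
qed

lemma strong_conn_le_degree:
  assumes sg: "simple_graph V E" and "card V \<ge> 2" and "v \<in> V"
  shows "strong_conn V E \<le> degree E v"
proof -
  have "finite V" using sg unfolding simple_graph_def by blast
  moreover have "{v} \<noteq> V" using assms(2) by auto
  ultimately have "strong_conn V E \<le> cut_size E {v}"
    using assms(3) by (intro strong_conn_le_cut_size) auto
  then show ?thesis using cut_size_singleton[OF sg] by simp
qed

lemma card_vertices_strong_conn_le: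
  assumes sg: "simple_graph V E" and "card V \<ge> 2"
  shows "card V * strong_conn V E \<le> 2 * card E"
proof -
  have "(\<Sum>v\<in>V. strong_conn V E) \<le> (\<Sum>v\<in>V. degree E v)"
    using strong_conn_le_degree[OF assms] by (intro sum_mono)
  thus ?thesis using handshake[OF sg] by simp
qed

lemma card_induced_edges_split:
  assumes "finite E"
  shows "card (induced_edges E W)
    \<le> card (induced_edges E S) + card (induced_edges E (W - S)) + cut_size (induced_edges E W) S"
proof -
  let ?F = "induced_edges E W"
  have cover: "?F \<subseteq> (induced_edges E S \<union> induced_edges E (W - S)) \<union> {e\<in>?F. e \<inter> S \<noteq> {} \<and> \<not> e \<subseteq> S}"
    unfolding induced_edges_def by auto
  have "card ?F \<le> card ((induced_edges E S \<union> induced_edges E (W - S))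
      \<union> {e\<in>?F. e \<inter> S \<noteq> {} \<and> \<not> e \<subseteq> S})"
    by (rule card_mono[OF _ cover]) (simp add: assms induced_edges_def)
  also have "\<dots> \<le> card (induced_edges E S \<union> induced_edges E (W - S)) + cut_size ?F S"
    unfolding cut_size_def by (rule card_Un_le)
  also have "\<dots> \<le> card (induced_edges E S) + card (induced_edges E (W - S)) + cut_size ?F S"
    using card_Un_le by (intro add_right_mono)
  finally show ?thesis .
qed

lemma card_psubset_split:
  assumes "finite W" "S \<noteq> {}" "S \<subset> W"
  shows "(card S - 1) + (card (W - S) - 1) + 1 = card W - 1"
proof -
  have "finite S" using assms(1,3) finite_subset by blast
  have "card S < card W" using assms(1,3) by (rule psubset_card_mono)
  moreover have "card (W - S) = card W - card S"
    using \<open>finite S\<close> assms(3) by (simp add: card_Diff_subset)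
  moreover have "card S > 0" using \<open>finite S\<close> assms(2) by (simp add: card_gt_0_iff)
  ultimately show ?thesis by linarith
qed

lemma card_induced_edges_le_by_strong_conn:
  assumes sg: "simple_graph V E"
    and sparse: "\<And>W. W \<subseteq> V \<Longrightarrow> card W \<ge> 2 \<Longrightarrow> strong_conn W (induced_edges E W) \<le> c"
  shows "W \<subseteq> V \<Longrightarrow> W \<noteq> {} \<Longrightarrow> card (induced_edges E W) \<le> c * (card W - 1)"
proof (induction "card W" arbitrary: W rule: less_induct)
  case less
  have finW: "finite W"
    using less.prems(1) sg finite_subset unfolding simple_graph_def by blast
  show ?case
  proof (cases "card W \<ge> 2")
    case False
    moreover have "card W > 0" using finW less.prems(2) by (simp add: card_gt_0_iff)
    ultimately have "card W = 1" by linarith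
    then obtain w where "W = {w}" by (rule card_1_singletonE)
    then show ?thesis using simple_graph_no_loop[OF sg] by (simp add: induced_edges_def)
  next
    case True
    let ?F = "induced_edges E W"
    obtain S where S: "S \<noteq> {}" "S \<subset> W" "cut_size ?F S = strong_conn W ?F"
      using strong_conn_attained[OF finW True] by blast
    define T where "T = W - S"
    have T: "T \<noteq> {}" "T \<subset> W" using S unfolding T_def by auto
    have "card S < card W" "card T < card W"
      using S(2) T(2) finW psubset_card_mono by blast+
    hence IH: "card (induced_edges E S) \<le> c * (card S - 1)"
      "card (induced_edges E T) \<le> c * (card T - 1)"
      using less.hyps S T less.prems(1) by (meson psubset_imp_subset subset_trans)+
    have cut: "cut_size ?F S \<le> c" using S(3) sparse less.prems(1) True by simp
    have vertices: "(card S - 1) + (card T - 1) + 1 = card W - 1"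
      using card_psubset_split[OF finW S(1,2)] unfolding T_def .
    have "card ?F \<le> card (induced_edges E S) + card (induced_edges E T) + cut_size ?F S"
      unfolding T_def by (rule card_induced_edges_split[OF simple_graph_finite_edges[OF sg]])
    also have "\<dots> \<le> c * (card S - 1) + c * (card T - 1) + c"
      using IH cut by linarith
    also have "\<dots> = c * (card W - 1)"
      unfolding vertices[symmetric] by (simp add: distrib_left)
    finally show ?thesis .
  qed
qed

lemma card_edges_le_by_strong_conn:
  assumes sg: "simple_graph V E" and "V \<noteq> {}"
    and "\<And>W. W \<subseteq> V \<Longrightarrow> card W \<ge> 2 \<Longrightarrow> strong_conn W (induced_edges E W) \<le> c"
  shows "card E \<le> c * (card V - 1)"
  using card_induced_edges_le_by_strong_conn[OF assms(1,3), of V] assms(2)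
  by (simp add: simple_graph_induced_edges_self[OF sg])

theorem mainTheorem11:
  "\<exists>a b :: real. a > 0 \<and> b > 0 \<and>
    (\<forall>(V :: nat set) (E :: nat set set) (k :: nat).
       simple_graph V E \<and> card V \<ge> 2 \<and> k \<ge> 1 \<and> strong_conn V E = k \<and>
       (\<forall>W. W \<subseteq> V \<and> card W \<ge> 2 \<longrightarrow> strong_conn W (induced_edges E W) < 2 * k)
       \<longrightarrow> a * real (card V) * real k \<le> real (card E) \<and>
           real (card E) \<le> b * real (card V) * real k)"
proof (rule exI[of _ "1/2"], rule exI[of _ 2], intro conjI allI impI; (elim conjE)?)
  fix V :: "nat set" and E :: "nat set set" and k :: nat
  assume sg: "simple_graph V E" and two: "card V \<ge> 2" and "k \<ge> 1" and k: "strong_conn V E = k"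
    and sparse: "\<forall>W. W \<subseteq> V \<and> card W \<ge> 2 \<longrightarrow> strong_conn W (induced_edges E W) < 2 * k"
  have "card V * k \<le> 2 * card E"
    using card_vertices_strong_conn_le[OF sg two] k by simp
  then have "real (card V * k) \<le> real (2 * card E)" by (rule of_nat_mono)
  then show "1/2 * real (card V) * real k \<le> real (card E)" by simp
  have "V \<noteq> {}" using two by auto
  moreover have "strong_conn W (induced_edges E W) \<le> 2 * k - 1" if "W \<subseteq> V" "card W \<ge> 2" for W
  proof -
    have "strong_conn W (induced_edges E W) < 2 * k" using sparse that by blast
    then show ?thesis by linarith
  qed
  ultimately have "card E \<le> (2 * k - 1) * (card V - 1)"
    by (rule card_edges_le_by_strong_conn[OF sg])
  also have "\<dots> \<le> 2 * k * card V" by (intro mult_le_mono diff_le_self)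
  finally have "real (card E) \<le> real (2 * k * card V)" by (rule of_nat_mono)
  then show "real (card E) \<le> 2 * real (card V) * real k" by (simp add: mult_ac)
qed simp_all

end
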